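(* Let $q$ be a probability mass function on $\mathbb{Z}$ with $q(z)=q(-z)$ for all $z$, whose support is not contained in any coset $c+d\mathbb{Z}$ with $d\ge2$ (equivalently, its characteristic function $\psi(u)=\sum_z q(z)e^{iuz}$ satisfies $|\psi(u)|<1$ for $0<|u|\le\pi$). Let $P^t(z,w)$ be the $t$-step transition probabilities of the random walk with increment law $q$. Then for every $m\in\mathbb{N}$ there exists $r\in\mathbb{N}$ such that the $r\times(m+1)$ matrix $$\mathbf{M}=\big(P^{t}(0,j)\big)_{1\le t\le r,\ 0\le j\le m}$$ has rank $m+1$. *)

theory Defs
  imports "HOL-Probability.Probability_Mass_Function" "Jordan_Normal_Form.DL_Rank"
begin

primrec walk_dist :: "int pmf \<Rightarrow> nat \<Rightarrow> int pmf" where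
  "walk_dist q 0 = return_pmf 0"
| "walk_dist q (Suc t) = bind_pmf (walk_dist q t) (\<lambda>x. map_pmf (\<lambda>z. x + z) q)"

definition trans_prob :: "int pmf \<Rightarrow> nat \<Rightarrow> int \<Rightarrow> int \<Rightarrow> real" where
  "trans_prob q t z w = pmf (walk_dist q t) (w - z)"

end

theory Submission
  imports Defs "HOL-Analysis.Analysis" "HOL-Computational_Algebra.Polynomial"
begin

text \<open>
  For symmetric q the characteristic function \<psi> of q is real, \<psi>(u)^t is the characteristic
  function of the walk after t steps, and Fourier inversion on [0, \<pi>] gives
  \<pi> P^t(0, j) = \<integral> \<psi>(u)^t cos(j u) du. If a vector v annihilated all rows of the matrix, the
  cosine polynomial f(u) = \<Sum> v_j cos(j u) would therefore satisfy \<integral> \<psi>^t f = 0 for all t \<ge> 1.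
  Unless f vanishes identically, f = F(cos u) for a nonzero polynomial F (Chebyshev), so f has
  finitely many zeros on [0, \<pi>] and a constant sign on some interval (0, \<eta>]. Aperiodicity
  gives |\<psi>| < 1 on (0, \<pi>] while \<psi>(0) = 1, so \<psi>^t concentrates at 0 and the integrals
  eventually take the sign of f near 0, a contradiction. Hence f = 0, so v = 0 by orthogonality
  of the cosines; as the space of vectors v is finite-dimensional, finitely many rows
  already have trivial common kernel.
\<close>

section \<open>The characteristic function of a symmetric walk\<close>

text \<open>The real part of the characteristic function; for symmetric laws it is \<psi> itself.\<close>
definition cos_charfun :: "int pmf \<Rightarrow> real \<Rightarrow> real" where
  "cos_charfun p u = measure_pmf.expectation p (\<lambda>z. cos (u * of_int z))"

lemma integrable_measure_pmf_bounded:
  fixes f :: "'a \<Rightarrow> real"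
  assumes "\<And>x. \<bar>f x\<bar> \<le> B"
  shows "integrable (measure_pmf p) f"
  by (rule measure_pmf.integrable_const_bound[where B = B]) (auto simp: assms)

lemma expectation_bind_pmf:
  fixes f :: "'b \<Rightarrow> real"
  assumes "\<And>x. \<bar>f x\<bar> \<le> B"
  shows "measure_pmf.expectation (bind_pmf p N) f =
    measure_pmf.expectation p (\<lambda>x. measure_pmf.expectation (N x) f)"
  unfolding measure_pmf_bind
  by (rule integral_bind[where K = "count_space UNIV" and B = B and B' = 1])
     (auto simp: assms measure_pmf.prob_space_axioms prob_space_imp_subprob_space
       measure_pmf.emeasure_space_1 measure_pmf.finite_measure_axioms measure_pmf_in_subprob_algebra)

lemma map_pmf_uminus_eq_self:
  fixes p :: "'a :: group_add pmf"
  assumes "\<forall>z. pmf p z = pmf p (- z)"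
  shows "map_pmf uminus p = p"
proof (rule pmf_eqI)
  fix z
  have "pmf (map_pmf uminus p) (- (- z)) = pmf p (- z)"
    by (rule pmf_map_inj') (auto intro: injI)
  then show "pmf (map_pmf uminus p) z = pmf p z"
    using assms by simp
qed

lemma expectation_sin_symmetric:
  fixes u :: real
  assumes "\<forall>z. pmf p z = pmf p (- z)"
  shows "measure_pmf.expectation p (\<lambda>z. sin (u * of_int z)) = 0"
proof -
  let ?E = "measure_pmf.expectation p (\<lambda>z. sin (u * of_int z))"
  have "?E = measure_pmf.expectation (map_pmf uminus p) (\<lambda>z. sin (u * of_int z))"
    by (simp only: map_pmf_uminus_eq_self[OF assms])
  also have "\<dots> = - ?E"
    by simp
  finally show ?thesis
    by simp
qed

lemma cos_charfun_add_symmetric: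
  assumes "\<forall>z. pmf q z = pmf q (- z)"
  shows "cos_charfun (bind_pmf p (\<lambda>x. map_pmf (\<lambda>z. x + z) q)) u = cos_charfun p u * cos_charfun q u"
proof -
  have shift: "measure_pmf.expectation q (\<lambda>z. cos (u * of_int (x + z))) = cos (u * x) * cos_charfun q u"
    for x :: int
  proof -
    have "measure_pmf.expectation q (\<lambda>z. cos (u * of_int (x + z))) =
        measure_pmf.expectation q (\<lambda>z. cos (u * x) * cos (u * z) - sin (u * x) * sin (u * z))"
      by (simp add: distrib_left cos_add)
    also have "\<dots> = cos (u * x) * cos_charfun q u
        - sin (u * x) * measure_pmf.expectation q (\<lambda>z. sin (u * of_int z))"
      unfolding cos_charfun_def
      by (subst Bochner_Integration.integral_diff)
         (auto intro!: integrable_measure_pmf_bounded[where B = 1] simp: abs_mult)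
    finally show ?thesis
      by (simp add: expectation_sin_symmetric[OF assms])
  qed
  have "cos_charfun (bind_pmf p (\<lambda>x. map_pmf (\<lambda>z. x + z) q)) u =
      measure_pmf.expectation p (\<lambda>x. measure_pmf.expectation q (\<lambda>z. cos (u * of_int (x + z))))"
    unfolding cos_charfun_def by (subst expectation_bind_pmf[where B = 1]) auto
  also have "\<dots> = cos_charfun p u * cos_charfun q u"
    by (simp only: shift) (simp add: cos_charfun_def)
  finally show ?thesis .
qed

lemma cos_charfun_walk_dist:
  assumes "\<forall>z. pmf q z = pmf q (- z)"
  shows "cos_charfun (walk_dist q t) u = cos_charfun q u ^ t"
proof (induction t)
  case 0
  show ?case
    by (simp add: cos_charfun_def)
next
  case (Suc t)
  then show ?case
    by (simp add: cos_charfun_add_symmetric[OF assms] mult.commute)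
qed

lemma walk_dist_symmetric:
  assumes "\<forall>z. pmf q z = pmf q (- z)"
  shows "pmf (walk_dist q t) (- z) = pmf (walk_dist q t) z"
proof -
  have "map_pmf uminus (walk_dist q t) = walk_dist q t"
  proof (induction t)
    case (Suc t)
    have "map_pmf uminus (walk_dist q (Suc t)) =
        bind_pmf (walk_dist q t) (\<lambda>x. map_pmf (\<lambda>z. - x + z) (map_pmf uminus q))"
      by (auto simp: map_bind_pmf pmf.map_comp o_def intro!: bind_pmf_cong map_pmf_cong)
    also have "\<dots> = bind_pmf (map_pmf uminus (walk_dist q t)) (\<lambda>x. map_pmf (\<lambda>z. x + z) q)"
      by (simp only: map_pmf_uminus_eq_self[OF assms]) (auto simp: bind_map_pmf o_def intro!: bind_pmf_cong map_pmf_cong)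
    finally show ?case
      using Suc by simp
  qed simp
  moreover have "pmf (map_pmf uminus (walk_dist q t)) (- z) = pmf (walk_dist q t) z"
    by (rule pmf_map_inj') (auto intro: injI)
  ultimately show ?thesis
    by simp
qed

lemma isCont_cos_charfun: "isCont (cos_charfun p) u"
  unfolding continuous_at_sequentially comp_def cos_charfun_def
  by (auto intro!: integral_dominated_convergence[where w = "\<lambda>_. 1"] tendsto_intros)

lemma continuous_on_cos_charfun: "continuous_on S (cos_charfun p)"
  by (intro continuous_at_imp_continuous_on ballI isCont_cos_charfun)

lemma cos_charfun_0 [simp]: "cos_charfun p 0 = 1"
  by (simp add: cos_charfun_def)

lemma abs_cos_charfun_le_1: "\<bar>cos_charfun p u\<bar> \<le> 1"
proof -
  have "\<bar>cos_charfun p u\<bar> \<le> measure_pmf.expectation p (\<lambda>z. \<bar>cos (u * of_int z)\<bar>)"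
    unfolding cos_charfun_def by (rule integral_abs_bound)
  also have "\<dots> \<le> measure_pmf.expectation p (\<lambda>z. 1)"
    by (intro integral_mono integrable_measure_pmf_bounded[where B = 1]) auto
  finally show ?thesis
    by simp
qed

lemma has_integral_cos_int:
  "((\<lambda>x. cos (of_int n * x)) has_integral pi * of_bool (n = 0)) {0..pi}"
proof (cases "n = 0")
  case False
  have "((\<lambda>x. cos (of_int n * x)) has_integral
      sin (of_int n * pi) / of_int n - sin (of_int n * 0) / of_int n) {0..pi}"
  proof (rule fundamental_theorem_of_calculus)
    show "((\<lambda>x. sin (of_int n * x) / of_int n) has_vector_derivative cos (of_int n * x))
        (at x within {0..pi})" for x :: real
      using False unfolding has_vector_derivative_def
      by (intro derivative_eq_intros | force)+
  qed auto
  with False show ?thesis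
    by (simp add: mult.commute)
qed (use has_integral_const_real[of "1::real" 0 pi] in auto)

lemma integral_cos_mult_cos:
  "integral {0..pi} (\<lambda>x. cos (of_int a * x) * cos (of_int b * x)) =
    pi / 2 * (of_bool (a = b) + of_bool (a = - b))"
proof -
  have "((\<lambda>x. (cos (of_int (a - b) * x) + cos (of_int (a + b) * x)) / 2) has_integral
      (pi * of_bool (a - b = 0) + pi * of_bool (a + b = 0)) / 2) {0..pi}"
    by (intro has_integral_divide has_integral_add has_integral_cos_int)
  then show ?thesis
    by (intro integral_unique) (auto simp: cos_times_cos algebra_simps)
qed

lemma integral_cos_charfun_mult_cos:
  "integral {0..pi} (\<lambda>u. cos_charfun p u * cos (of_int b * u)) = pi / 2 * (pmf p b + pmf p (- b))"
proof -
  let ?M = "lebesgue_on {0..pi::real}"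
  let ?f = "\<lambda>z u. cos (of_int z * u) * cos (of_int b * u)"
  interpret M: finite_measure ?M
    by (rule finite_measure_lebesgue_on) auto
  interpret pair_sigma_finite p ?M
    by unfold_locales
  have cont: "continuous_on {0..pi} (?f z)" for z
    by (intro continuous_intros)
  have "case_prod ?f \<in> borel_measurable (p \<Otimes>\<^sub>M ?M)"
    unfolding measurable_cong_sets[OF sets_pair_measure_cong[OF sets_measure_pmf_count_space refl] refl]
    by (rule measurable_pair_measure_countable1[where A = UNIV])
       (auto intro!: continuous_imp_measurable_on_sets_lebesgue cont)
  then have integrable: "integrable (p \<Otimes>\<^sub>M ?M) (case_prod ?f)"
    by (intro finite_measure.integrable_const_bound[where B = 1] finite_measure_pair_measure
          M.finite_measure_axioms measure_pmf.finite_measure_axioms)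
       (auto simp: abs_mult split: prod.splits intro!: AE_I2 mult_le_one)
  have "integral {0..pi} (\<lambda>u. cos_charfun p u * cos (of_int b * u)) =
      (\<integral>u. (\<integral>z. ?f z u \<partial>p) \<partial>?M)"
    unfolding cos_charfun_def
    by (subst lebesgue_integral_eq_integral)
       (auto simp: mult.commute intro!: continuous_imp_integrable_real continuous_intros continuous_on_cos_charfun[unfolded cos_charfun_def])
  also have "\<dots> = (\<integral>z. (\<integral>u. ?f z u \<partial>?M) \<partial>p)"
    by (rule Fubini_integral[OF integrable])
  also have "\<dots> = (\<integral>z. pi / 2 * (of_bool (z = b) + of_bool (z = - b)) \<partial>p)"
    by (intro Bochner_Integration.integral_cong refl)
       (simp add: lebesgue_integral_eq_integral[OF continuous_imp_integrable_real[OF cont]]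
         integral_cos_mult_cos)
  also have "\<dots> = pi / 2 * (pmf p b + pmf p (- b))"
    by (subst integral_measure_pmf_real[where A = "{b, - b}"])
       (auto split: if_splits, cases "b = 0", simp_all add: field_simps)
  finally show ?thesis .
qed

lemma integral_cos_charfun_power_mult_cos:
  assumes "\<forall>z. pmf q z = pmf q (- z)"
  shows "integral {0..pi} (\<lambda>u. cos_charfun q u ^ t * cos (real j * u)) = pi * pmf (walk_dist q t) (int j)"
  using integral_cos_charfun_mult_cos[of "walk_dist q t" "int j"]
  by (simp add: cos_charfun_walk_dist[OF assms] walk_dist_symmetric[OF assms])

section \<open>Aperiodicity\<close>

lemma cos_eq_cos_charfun_on_support:
  assumes "\<bar>cos_charfun p u\<bar> = 1" "z \<in> set_pmf p"
  shows "cos (u * of_int z) = cos_charfun p u"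
proof -
  define s where "s = cos_charfun p u"
  have s: "s * s = 1"
    using assms(1) abs_mult_self_eq[of s] by (simp add: s_def)
  have "\<bar>s * cos (u * of_int x)\<bar> \<le> 1" for x
    using assms(1) by (simp add: s_def abs_mult abs_cos_le_one)
  then have bounded: "\<bar>1 - s * cos (u * of_int x)\<bar> \<le> 2"
    and nonneg: "0 \<le> 1 - s * cos (u * of_int x)" for x
    unfolding abs_le_iff by (smt (verit))+
  have "measure_pmf.expectation p (\<lambda>x. 1 - s * cos (u * of_int x)) = 1 - s * s"
    unfolding s_def cos_charfun_def
    by (subst Bochner_Integration.integral_diff)
       (auto intro!: integrable_measure_pmf_bounded[where B = 1])
  then have "measure_pmf.expectation p (\<lambda>x. 1 - s * cos (u * of_int x)) = 0"
    using s by simp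
  then have "AE x in measure_pmf p. 1 - s * cos (u * of_int x) = 0"
    by (rule integral_nonneg_eq_0_iff_AE[THEN iffD1, OF integrable_measure_pmf_bounded[OF bounded]
          AE_I2[OF nonneg]])
  then have "s * cos (u * of_int z) = 1"
    using assms(2) by (simp add: AE_measure_pmf_iff)
  have "cos (u * of_int z) = (s * s) * cos (u * of_int z)"
    using s by simp
  also have "\<dots> = s * (s * cos (u * of_int z))"
    by (simp only: mult.assoc)
  also have "\<dots> = s"
    using \<open>s * cos (u * of_int z) = 1\<close> by simp
  finally show ?thesis
    unfolding s_def .
qed

lemma lowest_terms_of_rational:
  fixes x :: real
  assumes "x * of_int n = of_int k" "n \<noteq> 0"
  obtains s p where "0 < s" "coprime p s" "x * of_int s = of_int p"
proof -
  have x: "x * of_int \<bar>n\<bar> = of_int (sgn n * k)"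
    using assms(1) by (auto simp: abs_if sgn_if)
  define g where "g = gcd (sgn n * k) \<bar>n\<bar>"
  show thesis
  proof (rule that)
    show "0 < \<bar>n\<bar> div g"
      using assms(2) by (simp add: g_def pos_imp_zdiv_pos_iff zdvd_imp_le)
    show "coprime (sgn n * k div g) (\<bar>n\<bar> div g)"
      using assms(2) unfolding g_def by (intro div_gcd_coprime) auto
    have "\<bar>n\<bar> div g * g = \<bar>n\<bar>" "sgn n * k div g * g = sgn n * k"
      unfolding g_def by (metis dvd_div_mult_self gcd_dvd1 gcd_dvd2)+
    then have "x * of_int (\<bar>n\<bar> div g) * of_int g = of_int (sgn n * k div g) * of_int g"
      using x by (simp only: mult.assoc flip: of_int_mult)
    then show "x * of_int (\<bar>n\<bar> div g) = of_int (sgn n * k div g)"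
      using assms(2) by (simp add: g_def)
  qed
qed

lemma denominator_dvd_if_multiple_integral:
  fixes x :: real
  assumes "x * of_int s = of_int p" "coprime p s" "x * of_int m = of_int k"
  shows "s dvd m"
proof -
  have "of_int (p * m) = x * of_int s * of_int m"
    using assms(1) by simp
  also have "\<dots> = of_int (s * k)"
    using assms(3) by (simp add: ac_simps)
  finally have "s dvd p * m"
    by (simp only: of_int_eq_iff dvd_triv_left)
  then show ?thesis
    using assms(2) by (simp add: coprime_commute coprime_dvd_mult_right_iff)
qed

lemma subset_coset_if_fractional_multiples_integral:
  fixes x :: real and S :: "int set"
  assumes x: "0 < x" "x < 1" and "z0 \<in> S"
    and integral: "\<And>z. z \<in> S \<Longrightarrow> \<exists>k. x * of_int (z - z0) = of_int k"
  shows "\<exists>d\<ge>2. S \<subseteq> {y. \<exists>k. y = z0 + d * k}"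
proof (cases "S \<subseteq> {z0}")
  case True
  then show ?thesis
    by (intro exI[of _ 2]) auto
next
  case False
  then obtain z1 k where "x * of_int (z1 - z0) = of_int k" "z1 - z0 \<noteq> 0"
    using integral by (metis insert_subset right_minus_eq subsetI singletonI)
  then obtain s p where s: "0 < s" "coprime p s" "x * of_int s = of_int p"
    by (rule lowest_terms_of_rational)
  have "s \<noteq> 1"
  proof
    assume "s = 1"
    then have "(0::real) < of_int p" "of_int p < (1::real)"
      using s x by simp_all
    then show False
      by simp
  qed
  moreover have "\<exists>c. z = z0 + s * c" if "z \<in> S" for z
  proof -
    obtain k where "x * of_int (z - z0) = of_int k"
      using integral[OF \<open>z \<in> S\<close>] ..
    then have "s dvd z - z0"
      using s by (intro denominator_dvd_if_multiple_integral)
    then obtain c where "z - z0 = s * c" ..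
    then show ?thesis
      by (intro exI[of _ c]) linarith
  qed
  ultimately show ?thesis
    using s by (intro exI[of _ s]) auto
qed

lemma cos_eq_pm1_imp_diff_period:
  assumes "cos x = s" "cos y = s" "\<bar>s\<bar> = 1"
  shows "\<exists>k::int. (x - y) / (2 * pi) = of_int k"
proof -
  have "cos x * cos x = 1" "cos y * cos y = 1"
    using assms abs_mult_self_eq[of s] by simp_all
  then have "sin x = 0" "sin y = 0"
    using sin_cos_squared_add[of x] sin_cos_squared_add[of y] by (simp_all add: power2_eq_square)
  then have "cos (x - y) = 1"
    using assms \<open>cos x * cos x = 1\<close> by (simp add: cos_diff)
  then show ?thesis
    by (auto simp: cos_one_2pi_int)
qed

lemma abs_cos_charfun_less_1:
  assumes aper: "\<forall>c d::int. d \<ge> 2 \<longrightarrow> \<not> (set_pmf q \<subseteq> {x. \<exists>k. x = c + d * k})"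
    and u: "0 < u" "u \<le> pi"
  shows "\<bar>cos_charfun q u\<bar> < 1"
proof (rule ccontr)
  assume "\<not> \<bar>cos_charfun q u\<bar> < 1"
  then have abs1: "\<bar>cos_charfun q u\<bar> = 1"
    using abs_cos_charfun_le_1[of q u] by linarith
  obtain z0 where z0: "z0 \<in> set_pmf q"
    using set_pmf_not_empty[of q] by blast
  have "\<exists>k. u / (2 * pi) * of_int (z - z0) = of_int k" if "z \<in> set_pmf q" for z
    using cos_eq_pm1_imp_diff_period[OF cos_eq_cos_charfun_on_support[OF abs1 that]
        cos_eq_cos_charfun_on_support[OF abs1 z0] abs1]
    by (simp add: algebra_simps)
  moreover have "0 < u / (2 * pi)" "u / (2 * pi) < 1"
    using u by simp_all
  ultimately show False
    using subset_coset_if_fractional_multiples_integral[of "u / (2 * pi)" z0 "set_pmf q"] aper z0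
    by auto
qed

section \<open>Cosine polynomials\<close>

fun chebyshev_poly :: "nat \<Rightarrow> real poly" where
  "chebyshev_poly 0 = 1"
| "chebyshev_poly (Suc 0) = [:0, 1:]"
| "chebyshev_poly (Suc (Suc n)) = Polynomial.smult 2 ([:0, 1:] * chebyshev_poly (Suc n)) - chebyshev_poly n"

lemma poly_chebyshev_poly_cos: "poly (chebyshev_poly n) (cos x) = cos (real n * x)"
proof (induction n rule: chebyshev_poly.induct)
  case (3 n)
  have "x - real (Suc n) * x = - (real n * x)" "x + real (Suc n) * x = real (Suc (Suc n)) * x"
    by (simp_all add: algebra_simps)
  then have "2 * cos x * cos (real (Suc n) * x) = cos (real n * x) + cos (real (Suc (Suc n)) * x)"
    by (simp only: mult.assoc cos_times_cos cos_minus) simp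
  then show ?case
    using 3 by simp
qed simp_all

lemma finite_zeros_cos_sum:
  fixes v :: "nat \<Rightarrow> real"
  assumes "\<exists>u\<in>{0..pi}. (\<Sum>j<n. v j * cos (real j * u)) \<noteq> 0"
  shows "finite {u\<in>{0..pi}. (\<Sum>j<n. v j * cos (real j * u)) = 0}"
proof -
  define F where "F = (\<Sum>j<n. Polynomial.smult (v j) (chebyshev_poly j))"
  have F: "poly F (cos u) = (\<Sum>j<n. v j * cos (real j * u))" for u
    by (simp add: F_def poly_sum poly_chebyshev_poly_cos)
  then have "F \<noteq> 0"
    using assms by auto
  have "inj_on cos {0..pi}"
    by (auto intro!: inj_onI cos_inj_pi)
  then have "finite (cos -` {x. poly F x = 0} \<inter> {0..pi})"
    by (rule finite_vimage_IntI[OF poly_roots_finite[OF \<open>F \<noteq> 0\<close>]])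
  then show ?thesis
    by (rule finite_subset[rotated]) (auto simp: F)
qed

lemma cos_sum_eq_0_imp_coeff_eq_0:
  fixes v :: "nat \<Rightarrow> real"
  assumes "\<forall>u\<in>{0..pi}. (\<Sum>j<n. v j * cos (real j * u)) = 0" "k < n"
  shows "v k = 0"
proof -
  have orth: "integral {0..pi} (\<lambda>u. cos (real j * u) * cos (real k * u)) =
      pi / 2 * (of_bool (j = k) + of_bool (j = 0 \<and> k = 0))" for j
    using integral_cos_mult_cos[of "int j" "int k"] by simp
  have "integral {0..pi} (\<lambda>u. (\<Sum>j<n. v j * cos (real j * u)) * cos (real k * u)) =
      (\<Sum>j<n. v j * (pi / 2 * (of_bool (j = k) + of_bool (j = 0 \<and> k = 0))))"
    unfolding sum_distrib_right mult.assoc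
    by (subst integral_sum) (auto intro!: integrable_continuous_interval continuous_intros simp: orth)
  also have "\<dots> = v k * (pi / 2 * (1 + of_bool (k = 0)))"
    using assms(2) by (subst sum.remove[of _ k]) (auto intro!: sum.neutral)
  finally have "v k * (pi / 2 * (1 + of_bool (k = 0))) =
      integral {0..pi} (\<lambda>u. (\<Sum>j<n. v j * cos (real j * u)) * cos (real k * u))" ..
  also have "\<dots> = 0"
    using assms(1) by (subst integral_cong[where g = "\<lambda>_. 0"]) auto
  finally show ?thesis
    by (cases "k = 0") simp_all
qed

lemma sign_constant_if_nonzero:
  fixes f :: "'a::topological_space \<Rightarrow> real"
  assumes "connected S" "continuous_on S f" "\<forall>x\<in>S. f x \<noteq> 0"
  shows "(\<forall>x\<in>S. 0 < f x) \<or> (\<forall>x\<in>S. f x < 0)"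
proof (rule ccontr)
  assume "\<not> ?thesis"
  then obtain x y where "x \<in> S" "y \<in> S" "f x \<le> 0" "0 \<le> f y"
    by (auto simp: not_less)
  then have "0 \<in> f ` S"
    by (rule connectedD_interval[OF connected_continuous_image[OF assms(2,1)] imageI imageI])
  then show False
    using assms(3) by auto
qed

lemma sign_near_0_if_finite_zeros:
  fixes f :: "real \<Rightarrow> real"
  assumes "continuous_on {0..a} f" "0 < a" "finite {u\<in>{0..a}. f u = 0}"
  obtains \<eta> s where "0 < \<eta>" "\<eta> \<le> a" "\<bar>s\<bar> = 1" "\<And>u. 0 < u \<Longrightarrow> u \<le> \<eta> \<Longrightarrow> 0 < s * f u"
proof -
  define Z where "Z = insert a {u\<in>{0<..a}. f u = 0}"
  define \<eta> where "\<eta> = Min Z / 2"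
  have Z: "finite Z" "a \<in> Z" "\<forall>z\<in>Z. 0 < z"
    using assms(2,3) by (auto simp: Z_def elim: finite_subset[rotated])
  have "0 < Min Z"
    using Z by (subst Min_gr_iff) auto
  moreover have "Min Z \<le> a"
    using Z by (intro Min_le)
  ultimately have \<eta>: "0 < \<eta>" "\<eta> < Min Z" "\<eta> \<le> a"
    by (simp_all add: \<eta>_def)
  have "f u \<noteq> 0" if u: "u \<in> {0<..\<eta>}" for u
  proof
    assume "f u = 0"
    then have "u \<in> Z"
      using u \<eta> by (simp add: Z_def)
    then have "Min Z \<le> u"
      using Z(1) by (rule Min_le[rotated])
    then show False
      using u \<eta> by simp
  qed
  moreover have "continuous_on {0<..\<eta>} f"
    using \<eta> by (auto intro: continuous_on_subset[OF assms(1)])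
  ultimately have "(\<forall>u\<in>{0<..\<eta>}. 0 < f u) \<or> (\<forall>u\<in>{0<..\<eta>}. f u < 0)"
    by (intro sign_constant_if_nonzero) auto
  then show thesis
  proof
    assume "\<forall>u\<in>{0<..\<eta>}. 0 < f u"
    then show thesis
      using \<eta> by (intro that[of \<eta> 1]) auto
  next
    assume "\<forall>u\<in>{0<..\<eta>}. f u < 0"
    then show thesis
      using \<eta> by (intro that[of \<eta> "-1"]) auto
  qed
qed

section \<open>Concentration of powers of \<psi> at the origin\<close>

lemma continuous_on_above_near_0:
  fixes h :: "real \<Rightarrow> real"
  assumes "continuous_on {0..a} h" "0 < a" "c < h 0"
  obtains d where "0 < d" "d \<le> a" "\<And>u. 0 \<le> u \<Longrightarrow> u \<le> d \<Longrightarrow> c < h u"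
proof -
  obtain e where e: "0 < e" "\<And>u. u \<in> {0..a} \<Longrightarrow> dist u 0 < e \<Longrightarrow> dist (h u) (h 0) < h 0 - c"
    using assms(1,2,3) unfolding continuous_on_iff by (metis atLeastAtMost_iff diff_gt_0_iff_gt order.refl less_imp_le)
  show thesis
  proof (rule that[of "min a (e / 2)"])
    show "c < h u" if "0 \<le> u" "u \<le> min a (e / 2)" for u
      using e(2)[of u] that e(1) by (auto simp: dist_real_def)
  qed (use assms e in auto)
qed

lemma eventually_mult_power_less:
  fixes K M \<theta> C :: real
  assumes "0 \<le> M" "M < \<theta>" "0 < C"
  shows "eventually (\<lambda>t. K * M ^ t < C * \<theta> ^ t) sequentially"
proof -
  have "(\<lambda>t. K * (M / \<theta>) ^ t) \<longlonglongrightarrow> K * 0"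
    using assms by (intro tendsto_mult tendsto_const LIMSEQ_power_zero) auto
  then have "eventually (\<lambda>t. K * (M / \<theta>) ^ t < C) sequentially"
    using assms(3) by (intro order_tendstoD(2)) auto
  then show ?thesis
  proof (rule eventually_mono)
    fix t
    assume "K * (M / \<theta>) ^ t < C"
    then have "K * (M / \<theta>) ^ t * \<theta> ^ t < C * \<theta> ^ t"
      using assms by (intro mult_strict_right_mono) auto
    then show "K * M ^ t < C * \<theta> ^ t"
      using assms by (simp add: power_divide)
  qed
qed

lemma integral_power_mult_lower_bound:
  fixes \<psi> g :: "real \<Rightarrow> real"
  assumes cont: "continuous_on {0..pi} \<psi>" "continuous_on {0..pi} g"
    and "0 \<le> b" "b \<le> \<epsilon>" "\<epsilon> \<le> pi" "0 \<le> \<theta>"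
    and "\<And>u. 0 \<le> u \<Longrightarrow> u \<le> b \<Longrightarrow> \<theta> \<le> \<psi> u"
    and "\<And>u. 0 \<le> u \<Longrightarrow> u \<le> \<epsilon> \<Longrightarrow> 0 \<le> \<psi> u \<and> 0 \<le> g u"
    and far: "\<And>u. \<epsilon> \<le> u \<Longrightarrow> u \<le> pi \<Longrightarrow> \<bar>\<psi> u\<bar> \<le> M \<and> \<bar>g u\<bar> \<le> B"
  shows "integral {0..b} g * \<theta> ^ t - (pi - \<epsilon>) * B * M ^ t \<le> integral {0..pi} (\<lambda>u. \<psi> u ^ t * g u)"
proof -
  let ?f = "\<lambda>u. \<psi> u ^ t * g u"
  have integrable: "f integrable_on {l..h}"
    if "continuous_on {0..pi} f" "0 \<le> l" "h \<le> pi" for f :: "real \<Rightarrow> real" and l h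
    by (rule integrable_continuous_interval, rule continuous_on_subset[OF that(1)]) (use that in auto)
  have cont_f: "continuous_on {0..pi} ?f"
    using cont by (intro continuous_intros)
  have "integral {0..b} g * \<theta> ^ t = integral {0..b} (\<lambda>u. \<theta> ^ t * g u)"
    by (simp add: mult.commute)
  also have "\<dots> \<le> integral {0..b} ?f"
    using assms by (intro integral_le integrable continuous_intros cont cont_f
        mult_right_mono power_mono) auto
  finally have I1: "integral {0..b} g * \<theta> ^ t \<le> integral {0..b} ?f" .
  have I2: "0 \<le> integral {b..\<epsilon>} ?f"
    using assms by (intro integral_nonneg integrable cont_f) auto
  have "- ((pi - \<epsilon>) * B * M ^ t) = integral {\<epsilon>..pi} (\<lambda>u. - (M ^ t * B))"
    using assms by (simp add: algebra_simps)
  also have "\<dots> \<le> integral {\<epsilon>..pi} ?f"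
  proof (intro integral_le integrable cont_f)
    fix u
    assume "u \<in> {\<epsilon>..pi}"
    then have "\<bar>?f u\<bar> \<le> M ^ t * B"
      using far[of u] by (auto simp: abs_mult power_abs intro!: mult_mono power_mono)
    then show "- (M ^ t * B) \<le> ?f u"
      by linarith
  qed (use assms in auto)
  finally have I3: "- ((pi - \<epsilon>) * B * M ^ t) \<le> integral {\<epsilon>..pi} ?f" .
  have "integral {0..b} ?f + integral {b..\<epsilon>} ?f = integral {0..\<epsilon>} ?f"
    using assms by (intro Henstock_Kurzweil_Integration.integral_combine integrable cont_f) auto
  moreover have "integral {0..\<epsilon>} ?f + integral {\<epsilon>..pi} ?f = integral {0..pi} ?f"
    using assms by (intro Henstock_Kurzweil_Integration.integral_combine integrable cont_f) auto
  ultimately show ?thesis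
    using I1 I2 I3 by linarith
qed

lemma eventually_integral_power_mult_pos:
  fixes \<psi> g :: "real \<Rightarrow> real"
  assumes cont: "continuous_on {0..pi} \<psi>" "continuous_on {0..pi} g"
    and "\<psi> 0 = 1" and less_1: "\<And>u. 0 < u \<Longrightarrow> u \<le> pi \<Longrightarrow> \<bar>\<psi> u\<bar> < 1"
    and \<eta>: "0 < \<eta>" "\<eta> \<le> pi" and pos: "\<And>u. 0 < u \<Longrightarrow> u \<le> \<eta> \<Longrightarrow> 0 < g u"
  shows "eventually (\<lambda>t. 0 < integral {0..pi} (\<lambda>u. \<psi> u ^ t * g u)) sequentially"
proof -
  have g_nonneg: "0 \<le> g u" if "0 \<le> u" "u \<le> \<eta>" for u
    using continuous_ge_on_closure[of "{0<..\<eta>}" g u 0] continuous_on_subset[OF cont(2)] that \<eta> pos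
    by (simp add: closure_greaterThanAtMost less_imp_le)
  obtain \<epsilon> where \<epsilon>: "0 < \<epsilon>" "\<epsilon> \<le> \<eta>" "\<And>u. 0 \<le> u \<Longrightarrow> u \<le> \<epsilon> \<Longrightarrow> 0 < \<psi> u"
    using continuous_on_above_near_0[of \<eta> \<psi> 0] continuous_on_subset[OF cont(1)] \<eta> \<open>\<psi> 0 = 1\<close>
    by auto
  have "continuous_on {\<epsilon>..pi} (\<lambda>u. \<bar>\<psi> u\<bar>)"
    using \<epsilon> by (intro continuous_intros continuous_on_subset[OF cont(1)]) auto
  then obtain x where x: "x \<in> {\<epsilon>..pi}" "\<And>y. y \<in> {\<epsilon>..pi} \<Longrightarrow> \<bar>\<psi> y\<bar> \<le> \<bar>\<psi> x\<bar>"
    using continuous_attains_sup[of "{\<epsilon>..pi}" "\<lambda>u. \<bar>\<psi> u\<bar>"] \<epsilon> \<eta> by auto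
  define M where "M = \<bar>\<psi> x\<bar>"
  \<comment> \<open>\<psi> > \<theta> on [0, b] but |\<psi>| \<le> M < \<theta> on [\<epsilon>, \<pi>], so the integral over [0, b] wins.\<close>
  define \<theta> where "\<theta> = (1 + M) / 2"
  have M: "0 \<le> M" "M < \<theta>" "\<theta> < 1"
    using less_1[of x] x \<epsilon> by (auto simp: M_def \<theta>_def)
  obtain b where b: "0 < b" "b \<le> \<epsilon>" "\<And>u. 0 \<le> u \<Longrightarrow> u \<le> b \<Longrightarrow> \<theta> < \<psi> u"
    using continuous_on_above_near_0[of \<epsilon> \<psi> \<theta>] continuous_on_subset[OF cont(1)] \<epsilon> \<eta> M \<open>\<psi> 0 = 1\<close>
    by auto
  have "continuous_on {0..pi} (\<lambda>u. \<bar>g u\<bar>)"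
    by (intro continuous_intros cont(2))
  then obtain y where y: "\<And>u. u \<in> {0..pi} \<Longrightarrow> \<bar>g u\<bar> \<le> \<bar>g y\<bar>"
    using continuous_attains_sup[of "{0..pi}" "\<lambda>u. \<bar>g u\<bar>"] by fastforce
  have "0 < integral {0..b} g"
    using integral_less_real[of 0 b "\<lambda>_. 0" g] continuous_on_subset[OF cont(2)] pos b \<epsilon> \<eta>
    by auto
  then have "eventually (\<lambda>t. (pi - \<epsilon>) * \<bar>g y\<bar> * M ^ t < integral {0..b} g * \<theta> ^ t) sequentially"
    using M by (intro eventually_mult_power_less) auto
  then show ?thesis
  proof (rule eventually_mono)
    fix t
    have "integral {0..b} g * \<theta> ^ t - (pi - \<epsilon>) * \<bar>g y\<bar> * M ^ t \<le> integral {0..pi} (\<lambda>u. \<psi> u ^ t * g u)"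
      using b \<epsilon> \<eta> M x y g_nonneg
      by (intro integral_power_mult_lower_bound cont) (auto simp: M_def less_imp_le)
    then show "(pi - \<epsilon>) * \<bar>g y\<bar> * M ^ t < integral {0..b} g * \<theta> ^ t \<Longrightarrow>
        0 < integral {0..pi} (\<lambda>u. \<psi> u ^ t * g u)"
      by linarith
  qed
qed

section \<open>Independence of the rows\<close>

lemma integral_cos_charfun_power_mult_cos_sum:
  assumes "\<forall>z. pmf q z = pmf q (- z)"
  shows "integral {0..pi} (\<lambda>u. cos_charfun q u ^ t * (\<Sum>j<n. v j * cos (real j * u))) =
    pi * (\<Sum>j<n. pmf (walk_dist q t) (int j) * v j)"
proof -
  have "integral {0..pi} (\<lambda>u. cos_charfun q u ^ t * (\<Sum>j<n. v j * cos (real j * u))) =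
      (\<Sum>j<n. v j * integral {0..pi} (\<lambda>u. cos_charfun q u ^ t * cos (real j * u)))"
    unfolding sum_distrib_left
    by (subst integral_sum)
       (auto simp: mult.left_commute intro!: integrable_continuous_interval continuous_intros
         continuous_on_cos_charfun)
  then show ?thesis
    by (simp only: integral_cos_charfun_power_mult_cos[OF assms]) (simp add: sum_distrib_left mult_ac)
qed

lemma walk_dist_rows_independent:
  assumes symm: "\<forall>z. pmf q z = pmf q (- z)"
    and aper: "\<forall>c d::int. d \<ge> 2 \<longrightarrow> \<not> (set_pmf q \<subseteq> {x. \<exists>k. x = c + d * k})"
    and v: "\<forall>t. (\<Sum>j<n. pmf (walk_dist q (Suc t)) (int j) * v j) = 0"
  shows "\<forall>j<n. v j = 0"
proof -
  define f where "f u = (\<Sum>j<n. v j * cos (real j * u))" for u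
  have cont_f: "continuous_on S f" for S
    unfolding f_def by (intro continuous_intros)
  have "\<forall>u\<in>{0..pi}. f u = 0"
  proof (rule ccontr)
    assume "\<not> (\<forall>u\<in>{0..pi}. f u = 0)"
    then have "finite {u\<in>{0..pi}. f u = 0}"
      unfolding f_def by (intro finite_zeros_cos_sum) auto
    then obtain \<eta> s where \<eta>: "0 < \<eta>" "\<eta> \<le> pi" "\<bar>s\<bar> = 1" "\<And>u. 0 < u \<Longrightarrow> u \<le> \<eta> \<Longrightarrow> 0 < s * f u"
      using sign_near_0_if_finite_zeros[OF cont_f pi_gt_zero] by blast
    have "eventually (\<lambda>t. 0 < integral {0..pi} (\<lambda>u. cos_charfun q u ^ t * (s * f u))) sequentially"
      using \<eta> abs_cos_charfun_less_1[OF aper]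
      by (intro eventually_integral_power_mult_pos continuous_on_cos_charfun continuous_intros cont_f) auto
    then obtain t where "0 < integral {0..pi} (\<lambda>u. cos_charfun q u ^ Suc t * (s * f u))"
      unfolding eventually_sequentially by (meson le_SucI order.refl)
    moreover have "integral {0..pi} (\<lambda>u. cos_charfun q u ^ Suc t * (s * f u)) = 0"
      using integral_cos_charfun_power_mult_cos_sum[OF symm, where t = "Suc t" and n = n and v = v] v
      by (simp add: f_def mult.left_commute[of _ s])
    ultimately show False
      by simp
  qed
  then show ?thesis
    using cos_sum_eq_0_imp_coeff_eq_0[of v n] unfolding f_def by blast
qed

section \<open>Finitely many rows suffice\<close>

lemma sum_eliminate_last_unknown:
  fixes c :: "nat \<Rightarrow> nat \<Rightarrow> 'a::field"
  shows "(\<Sum>j<Suc n. c t j * (v(n := - (\<Sum>j<n. c t0 j * v j) / c t0 n)) j) =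
    (\<Sum>j<n. (c t j - c t n / c t0 n * c t0 j) * v j)"
proof -
  have "(\<Sum>j<Suc n. c t j * (v(n := - (\<Sum>j<n. c t0 j * v j) / c t0 n)) j) =
      (\<Sum>j<n. c t j * v j) - c t n / c t0 n * (\<Sum>j<n. c t0 j * v j)"
    by simp
  also have "\<dots> = (\<Sum>j<n. (c t j - c t n / c t0 n * c t0 j) * v j)"
    by (simp add: sum_distrib_left sum_subtractf left_diff_distrib mult.assoc)
  finally show ?thesis .
qed

lemma rows_suffice_if_rows_suffice_after_elimination:
  fixes c :: "nat \<Rightarrow> nat \<Rightarrow> 'a::field"
  assumes pivot: "c t0 n \<noteq> 0"
    and r: "\<forall>v. (\<forall>t<r. (\<Sum>j<n. (c t j - c t n / c t0 n * c t0 j) * v j) = 0) \<longrightarrow> (\<forall>j<n. v j = 0)"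
  shows "\<forall>v. (\<forall>t<max r (Suc t0). (\<Sum>j<Suc n. c t j * v j) = 0) \<longrightarrow> (\<forall>j<Suc n. v j = 0)"
proof (rule allI, rule impI)
  fix v
  assume v: "\<forall>t<max r (Suc t0). (\<Sum>j<Suc n. c t j * v j) = 0"
  then have "(\<Sum>j<n. c t0 j * v j) + c t0 n * v n = 0"
    by simp
  then have "- (\<Sum>j<n. c t0 j * v j) = c t0 n * v n"
    by (simp add: add_eq_0_iff2)
  then have vn: "v n = - (\<Sum>j<n. c t0 j * v j) / c t0 n"
    using pivot by simp
  then have upd: "v(n := - (\<Sum>j<n. c t0 j * v j) / c t0 n) = v"
    by (metis fun_upd_triv)
  have "\<forall>t<r. (\<Sum>j<n. (c t j - c t n / c t0 n * c t0 j) * v j) = 0"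
  proof (intro allI impI)
    fix t
    assume "t < r"
    have "(\<Sum>j<n. (c t j - c t n / c t0 n * c t0 j) * v j) =
        (\<Sum>j<Suc n. c t j * (v(n := - (\<Sum>j<n. c t0 j * v j) / c t0 n)) j)"
      by (rule sum_eliminate_last_unknown[symmetric])
    also have "\<dots> = (\<Sum>j<Suc n. c t j * v j)"
      by (simp only: upd)
    also have "\<dots> = 0"
      using v \<open>t < r\<close> by simp
    finally show "(\<Sum>j<n. (c t j - c t n / c t0 n * c t0 j) * v j) = 0" .
  qed
  then have "\<forall>j<n. v j = 0"
    using r by blast
  moreover have "v n = 0"
    using vn calculation by simp
  ultimately show "\<forall>j<Suc n. v j = 0"
    using less_Suc_eq by auto
qed

lemma finitely_many_rows_suffice:
  fixes c :: "nat \<Rightarrow> nat \<Rightarrow> 'a::field"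
  assumes "\<And>v. \<forall>t. (\<Sum>j<n. c t j * v j) = 0 \<Longrightarrow> \<forall>j<n. v j = 0"
  shows "\<exists>r. \<forall>v. (\<forall>t<r. (\<Sum>j<n. c t j * v j) = 0) \<longrightarrow> (\<forall>j<n. v j = 0)"
  using assms
proof (induction n arbitrary: c)
  case (Suc n)
  have "\<exists>t0. c t0 n \<noteq> 0"
  proof (rule ccontr)
    assume "\<nexists>t0. c t0 n \<noteq> 0"
    then have "\<forall>t. (\<Sum>j<Suc n. c t j * of_bool (j = n)) = 0"
      by simp
    then have "\<forall>j<Suc n. of_bool (j = n) = (0::'a)"
      by (rule Suc.prems)
    from this[rule_format, of n] show False
      by simp
  qed
  then obtain t0 where pivot: "c t0 n \<noteq> 0" ..
  have "\<forall>j<n. v j = 0" if "\<forall>t. (\<Sum>j<n. (c t j - c t n / c t0 n * c t0 j) * v j) = 0" for v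
  proof -
    have "\<forall>t. (\<Sum>j<Suc n. c t j * (v(n := - (\<Sum>j<n. c t0 j * v j) / c t0 n)) j) = 0"
      unfolding sum_eliminate_last_unknown by (rule that)
    then have upd: "\<forall>j<Suc n. (v(n := - (\<Sum>j<n. c t0 j * v j) / c t0 n)) j = 0"
      by (rule Suc.prems)
    show ?thesis
    proof (intro allI impI)
      fix j
      assume "j < n"
      then show "v j = 0"
        using upd[rule_format, of j] by simp
    qed
  qed
  then have "\<exists>r. \<forall>v. (\<forall>t<r. (\<Sum>j<n. (c t j - c t n / c t0 n * c t0 j) * v j) = 0) \<longrightarrow> (\<forall>j<n. v j = 0)"
    by (rule Suc.IH)
  then obtain r where "\<forall>v. (\<forall>t<r. (\<Sum>j<n. (c t j - c t n / c t0 n * c t0 j) * v j) = 0) \<longrightarrow> (\<forall>j<n. v j = 0)" ..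
  with pivot have "\<forall>v. (\<forall>t<max r (Suc t0). (\<Sum>j<Suc n. c t j * v j) = 0) \<longrightarrow> (\<forall>j<Suc n. v j = 0)"
    by (rule rows_suffice_if_rows_suffice_after_elimination)
  then show ?case ..
qed simp

lemma distinct_cols_if_trivial_kernel:
  fixes A :: "'a::comm_ring_1 mat"
  assumes A: "A \<in> carrier_mat n nc"
    and kernel: "\<And>v. v \<in> carrier_vec nc \<Longrightarrow> A *\<^sub>v v = 0\<^sub>v n \<Longrightarrow> v = 0\<^sub>v nc"
  shows "distinct (cols A)"
proof (rule ccontr)
  assume "\<not> distinct (cols A)"
  then obtain i j where ij: "i \<noteq> j" "i < nc" "j < nc" "col A i = col A j"
    using A by (auto simp: distinct_conv_nth)
  define v :: "'a vec" where "v = unit_vec nc i - unit_vec nc j"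
  have "A *\<^sub>v v = 0\<^sub>v n"
  proof (rule eq_vecI)
    fix k
    assume k: "k < dim_vec (0\<^sub>v n :: 'a vec)"
    have "A $$ (k, i) = col A i $ k"
      using A ij(2) k by simp
    also have "\<dots> = A $$ (k, j)"
      using A ij(3) k by (simp only: ij(4)) simp
    finally show "(A *\<^sub>v v) $ k = 0\<^sub>v n $ k"
      using A ij k by (simp add: v_def scalar_prod_minus_distrib[of _ nc])
  qed (use A in simp)
  then have "v = 0\<^sub>v nc"
    by (rule kernel[rotated]) (simp add: v_def)
  then have "v $ i = 0"
    using ij by simp
  moreover have "v $ i = 1"
    using ij by (simp add: v_def)
  ultimately show False
    by simp
qed

lemma (in vec_space) rank_eq_dim_col_if_trivial_kernel:
  assumes A: "A \<in> carrier_mat n nc"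
    and kernel: "\<And>v. v \<in> carrier_vec nc \<Longrightarrow> A *\<^sub>v v = 0\<^sub>v n \<Longrightarrow> v = 0\<^sub>v nc"
  shows "rank A = nc"
proof -
  have distinct: "distinct (cols A)"
    using A kernel by (rule distinct_cols_if_trivial_kernel)
  moreover have "lin_indpt (set (cols A))"
  proof
    assume "lin_dep (set (cols A))"
    then obtain v where "v \<in> carrier_vec nc" "v \<noteq> 0\<^sub>v nc" "A *\<^sub>v v = 0\<^sub>v n"
      by (rule lin_depE[OF A _ distinct])
    then show False
      using kernel by simp
  qed
  ultimately show ?thesis
    by (rule lin_indpt_full_rank[OF A])
qed

lemma ex_rank_mat_eq_dim_col:
  fixes c :: "nat \<Rightarrow> nat \<Rightarrow> 'a::field"
  assumes "\<And>v. \<forall>t. (\<Sum>j<n. c t j * v j) = 0 \<Longrightarrow> \<forall>j<n. v j = 0"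
  shows "\<exists>r. vec_space.rank r (mat r n (\<lambda>(i, j). c i j)) = n"
proof -
  from finitely_many_rows_suffice[OF assms]
  obtain r where r: "\<forall>v. (\<forall>t<r. (\<Sum>j<n. c t j * v j) = 0) \<longrightarrow> (\<forall>j<n. v j = 0)" ..
  have "vec_space.rank r (mat r n (\<lambda>(i, j). c i j)) = n"
  proof (rule vec_space.rank_eq_dim_col_if_trivial_kernel)
    fix v :: "'a vec"
    assume v: "v \<in> carrier_vec n" "mat r n (\<lambda>(i, j). c i j) *\<^sub>v v = 0\<^sub>v r"
    have "\<forall>t<r. (\<Sum>j<n. c t j * v $ j) = 0"
    proof (intro allI impI)
      fix t
      assume "t < r"
      then show "(\<Sum>j<n. c t j * v $ j) = 0"
        using arg_cong[OF v(2), of "\<lambda>w. w $ t"] v(1)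
        by (simp add: scalar_prod_def atLeast0LessThan)
    qed
    then have "\<forall>j<n. v $ j = 0"
      by (rule mp[OF spec[OF r, where x = "\<lambda>j. v $ j"]])
    then show "v = 0\<^sub>v n"
      using v(1) by (intro eq_vecI) simp_all
  qed simp
  then show ?thesis ..
qed

theorem lemma3p2:
  fixes q :: "int pmf" and m :: nat
  assumes symm: "\<forall>z. pmf q z = pmf q (- z)"
    and aper: "\<forall>c d::int. d \<ge> 2 \<longrightarrow> \<not> (set_pmf q \<subseteq> {x. \<exists>k. x = c + d * k})"
  shows "\<exists>r::nat. vec_space.rank r
           (mat r (m + 1) (\<lambda>(i, j). trans_prob q (i + 1) 0 (int j)) :: real mat) = m + 1"
proof (rule ex_rank_mat_eq_dim_col)
  fix v :: "nat \<Rightarrow> real"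
  assume "\<forall>t. (\<Sum>j<m + 1. trans_prob q (t + 1) 0 (int j) * v j) = 0"
  then show "\<forall>j<m + 1. v j = 0"
    by (intro walk_dist_rows_independent[OF symm aper]) (simp add: trans_prob_def)
qed

end
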